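(* $E^{ce}_{\mathrm{perm}}$ and $E^{ce}_{\mathrm{set}}$ are computably bireducible: $E^{ce}_{\mathrm{perm}}\leq_cE^{ce}_{\mathrm{set}}$ and $E^{ce}_{\mathrm{set}}\leq_cE^{ce}_{\mathrm{perm}}$.
   Context: $W_e$ is the $e$-th c.e. set; $A^{[n]}=\{x:\langle x,n\rangle\in A\}$ is the $n$-th column of $A\subseteq\omega$ under the standard pairing function. $i\,E^{ce}_{\mathrm{perm}}\,j\iff$ there is a permutation $p$ of $\omega$ with $W_i^{[n]}=W_j^{[p(n)]}$ for all $n$. $i\,E^{ce}_{\mathrm{set}}\,j\iff\{W_i^{[n]}:n\in\omega\}=\{W_j^{[n]}:n\in\omega\}$. For equivalence relations $E,F$ on $\omega$, $E\leq_cF$ means there is a total computable $g$ with $x\,E\,y\iff g(x)\,F\,g(y)$ for all $x,y$. *)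

theory Defs
  imports Main "HOL-Library.Nat_Bijection"
begin

datatype recf =
    Zero
  | Succ
  | Proj nat
  | Comp recf "recf list"
  | Prim recf recf
  | Mu recf

inductive eval :: "recf \<Rightarrow> nat list \<Rightarrow> nat \<Rightarrow> bool" where
  eval_Zero: "eval Zero xs 0"
| eval_Succ: "eval Succ (x # xs) (Suc x)"
| eval_Proj: "i < length xs \<Longrightarrow> eval (Proj i) xs (xs ! i)"
| eval_Comp: "list_all2 (\<lambda>g y. eval g xs y) gs ys \<Longrightarrow> eval f ys z \<Longrightarrow> eval (Comp f gs) xs z"
| eval_Prim0: "eval f xs y \<Longrightarrow> eval (Prim f g) (0 # xs) y"
| eval_PrimS: "eval (Prim f g) (n # xs) y \<Longrightarrow> eval g (n # y # xs) z
      \<Longrightarrow> eval (Prim f g) (Suc n # xs) z"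
| eval_Mu: "eval f (n # xs) 0 \<Longrightarrow> (\<forall>m<n. \<exists>k. eval f (m # xs) (Suc k))
      \<Longrightarrow> eval (Mu f) xs n"

fun encode :: "recf \<Rightarrow> nat" where
  "encode Zero = prod_encode (0, 0)"
| "encode Succ = prod_encode (1, 0)"
| "encode (Proj i) = prod_encode (2, i)"
| "encode (Comp f gs) = prod_encode (3, prod_encode (encode f, list_encode (map encode gs)))"
| "encode (Prim f g) = prod_encode (4, prod_encode (encode f, encode g))"
| "encode (Mu f) = prod_encode (5, encode f)"

text \<open>The e-th c.e. set: the domain of the e-th unary partial recursive function
  (empty if e codes no function).\<close>
definition W :: "nat \<Rightarrow> nat set" where
  "W e = {x. \<exists>f y. encode f = e \<and> eval f [x] y}"

definition computable :: "(nat \<Rightarrow> nat) \<Rightarrow> bool" where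
  "computable g \<longleftrightarrow> (\<exists>f. \<forall>x. eval f [x] (g x))"

definition column :: "nat set \<Rightarrow> nat \<Rightarrow> nat set" where
  "column A n = {x. prod_encode (x, n) \<in> A}"

definition E_perm :: "nat \<Rightarrow> nat \<Rightarrow> bool" where
  "E_perm i j \<longleftrightarrow> (\<exists>p. bij p \<and> (\<forall>n. column (W i) n = column (W j) (p n)))"

definition E_set :: "nat \<Rightarrow> nat \<Rightarrow> bool" where
  "E_set i j \<longleftrightarrow> range (column (W i)) = range (column (W j))"

definition creducible :: "(nat \<Rightarrow> nat \<Rightarrow> bool) \<Rightarrow> (nat \<Rightarrow> nat \<Rightarrow> bool) \<Rightarrow> bool" where
  "creducible E F \<longleftrightarrow> (\<exists>g. computable g \<and> (\<forall>x y. E x y \<longleftrightarrow> F (g x) (g y)))"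

end

theory Submission
  imports Defs "HOL-Library.Equipollence" "HOL-Library.Disjoint_Sets"
begin

text \<open>Both reductions have the form \<open>W (g i) = {x. P x \<and> h x \<in> W i}\<close> with \<open>P\<close> decidable and
  \<open>h\<close> total recursive, and such a \<open>g\<close> is computable because it just composes programs.

  For \<open>E_set \<le>\<^sub>c E_perm\<close>, column \<open>\<langle>n, k\<rangle>\<close> of the new set is column \<open>n\<close> of \<open>W i\<close>. Every
  column is thus repeated infinitely often, so when the two sets of columns agree every fibre of
  either column sequence is infinite or empty; corresponding fibres are equipollent, and gluing
  bijections between them gives the permutation.

  For \<open>E_perm \<le>\<^sub>c E_set\<close>, the columns of the new set code the pairs \<open>(n0, ms)\<close>: the columns
  \<open>X (ms ! j)\<close> tagged by \<open>j\<close>, and the equality pattern of the list \<open>ms\<close> tagged by the elements of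
  \<open>X n0\<close>. A permutation of the columns just renames \<open>ms\<close>. Conversely, equal sets of codes carry
  a distinct list of indices of one column value to a distinct list of the same length on the
  other side, so corresponding fibres are again equipollent.\<close>

lemma eval_deterministic: "eval f xs y \<Longrightarrow> eval f xs y' \<Longrightarrow> y = y'"
proof (induction arbitrary: y' rule: eval.induct)
  case (eval_Comp xs gs ys f z)
  from eval_Comp.prems obtain ys' where "list_all2 (\<lambda>g y. eval g xs y) gs ys'" "eval f ys' y'"
    by (cases rule: eval.cases) auto
  moreover from eval_Comp.IH(1) this(1) have "ys = ys'"
    by (induction arbitrary: ys' rule: list_all2_induct) (auto simp: list_all2_Cons1)
  ultimately show ?case using eval_Comp.IH(2) by blast
next
  case (eval_Mu f n xs)
  from eval_Mu.prems have "eval f (y' # xs) 0" "\<forall>m<y'. \<exists>k. eval f (m # xs) (Suc k)"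
    by (cases rule: eval.cases, auto)+
  with eval_Mu.IH show ?case
    by (metis Zero_not_Suc linorder_neqE_nat)
next
  case (eval_PrimS f g n xs y z)
  from eval_PrimS.prems show ?case by (cases rule: eval.cases) (use eval_PrimS.IH in auto)
qed (erule eval.cases; auto)+

section \<open>Total recursive functions and decidable predicates\<close>

definition computes :: "nat \<Rightarrow> recf \<Rightarrow> (nat list \<Rightarrow> nat) \<Rightarrow> bool" where
  "computes n F f \<longleftrightarrow> (\<forall>xs. length xs = n \<longrightarrow> eval F xs (f xs))"

definition recursive :: "nat \<Rightarrow> (nat list \<Rightarrow> nat) \<Rightarrow> bool" where
  "recursive n f \<longleftrightarrow> (\<exists>F. computes n F f)"

definition decidable :: "nat \<Rightarrow> (nat list \<Rightarrow> bool) \<Rightarrow> bool" where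
  "decidable n P \<longleftrightarrow> recursive n (\<lambda>xs. if P xs then 0 else 1)"

lemma computes_eval_iff: "computes n F f \<Longrightarrow> length xs = n \<Longrightarrow> eval F xs y \<longleftrightarrow> y = f xs"
  unfolding computes_def using eval_deterministic by blast

lemma computable_iff_recursive: "computable f \<longleftrightarrow> recursive 1 (\<lambda>xs. f (xs ! 0))"
proof -
  have "computes 1 F (\<lambda>xs. f (xs ! 0)) \<longleftrightarrow> (\<forall>x. eval F [x] (f x))" for F
    by (auto simp: computes_def length_Suc_conv)
  then show ?thesis by (simp add: computable_def recursive_def)
qed

lemma recursive_cong:
  "recursive n f \<Longrightarrow> (\<And>xs. length xs = n \<Longrightarrow> f xs = g xs) \<Longrightarrow> recursive n g"
  unfolding recursive_def computes_def by metis

lemma recursive_nth: "i < n \<Longrightarrow> recursive n (\<lambda>xs. xs ! i)"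
  unfolding recursive_def computes_def by (auto intro: eval_Proj)

lemma recursive_comp:
  assumes "recursive (length gs) f" and "\<forall>g\<in>set gs. recursive n g"
  shows "recursive n (\<lambda>xs. f (map (\<lambda>g. g xs) gs))"
proof -
  obtain F where F: "computes (length gs) F f" using assms(1) unfolding recursive_def by blast
  have "\<exists>Gs. list_all2 (\<lambda>G g. computes n G g) Gs gs"
    using assms(2) unfolding recursive_def by (induction gs) (auto simp: list_all2_Cons2)
  then obtain Gs where Gs: "list_all2 (\<lambda>G g. computes n G g) Gs gs" by blast
  have "eval (Comp F Gs) xs (f (map (\<lambda>g. g xs) gs))" if "length xs = n" for xs
  proof (rule eval_Comp)
    show "list_all2 (\<lambda>G y. eval G xs y) Gs (map (\<lambda>g. g xs) gs)"
      using Gs that by (auto simp: list_all2_map2 computes_def elim: list_all2_mono)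
    show "eval F (map (\<lambda>g. g xs) gs) (f (map (\<lambda>g. g xs) gs))"
      using F by (simp add: computes_def)
  qed
  then show ?thesis unfolding recursive_def computes_def by blast
qed

lemma recursive_comp1:
  "recursive 1 (\<lambda>ys. f (ys ! 0)) \<Longrightarrow> recursive n g \<Longrightarrow> recursive n (\<lambda>xs. f (g xs))"
  using recursive_comp[of "[g]" "\<lambda>ys. f (ys ! 0)"] by simp

lemma recursive_comp2:
  "recursive 2 (\<lambda>ys. f (ys ! 0) (ys ! 1)) \<Longrightarrow> recursive n g \<Longrightarrow> recursive n h \<Longrightarrow>
    recursive n (\<lambda>xs. f (g xs) (h xs))"
  using recursive_comp[of "[g, h]" "\<lambda>ys. f (ys ! 0) (ys ! 1)"] by (simp add: numeral_2_eq_2)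

lemma recursive_comp3:
  "recursive 3 (\<lambda>ys. f (ys ! 0) (ys ! 1) (ys ! 2)) \<Longrightarrow> recursive n g \<Longrightarrow> recursive n h \<Longrightarrow>
    recursive n k \<Longrightarrow> recursive n (\<lambda>xs. f (g xs) (h xs) (k xs))"
  using recursive_comp[of "[g, h, k]" "\<lambda>ys. f (ys ! 0) (ys ! 1) (ys ! 2)"] by (simp add: numeral_3_eq_3)

lemma recursive_Suc: "recursive n g \<Longrightarrow> recursive n (\<lambda>xs. Suc (g xs))"
proof (rule recursive_comp1[of Suc])
  show "recursive 1 (\<lambda>ys. Suc (ys ! 0))"
    unfolding recursive_def computes_def by (auto simp: length_Suc_conv intro!: exI[of _ Succ] eval_Succ)
qed

lemma recursive_const: "recursive n (\<lambda>_. c)"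
proof (induction c)
  case 0
  show ?case unfolding recursive_def computes_def by (auto intro: eval_Zero)
qed (rule recursive_Suc)

lemma recursive_Prim:
  assumes "recursive n f" and "recursive (Suc (Suc n)) g"
  shows "recursive (Suc n) (\<lambda>xs. rec_nat (f (tl xs)) (\<lambda>m y. g (m # y # tl xs)) (hd xs))"
proof -
  obtain F G where F: "computes n F f" and G: "computes (Suc (Suc n)) G g"
    using assms unfolding recursive_def by blast
  have Prim: "eval (Prim F G) (m # ys) (rec_nat (f ys) (\<lambda>m y. g (m # y # ys)) m)"
    if "length ys = n" for m ys
    using F G that by (induction m) (auto simp: computes_def intro: eval_Prim0 eval_PrimS)
  show ?thesis unfolding recursive_def computes_def
  proof (intro exI allI impI)
    fix xs :: "nat list"
    assume "length xs = Suc n"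
    then obtain m ys where "xs = m # ys" and "length ys = n" by (cases xs) auto
    then show "eval (Prim F G) xs (rec_nat (f (tl xs)) (\<lambda>m y. g (m # y # tl xs)) (hd xs))"
      using Prim by simp
  qed
qed

lemma rec_nat_eq_funpow: "rec_nat a (\<lambda>_ y. f y) n = (f ^^ n) a"
  by (induction n) auto

lemma recursive_funpow:
  assumes "recursive 1 (\<lambda>ys. f (ys ! 0))" and "recursive n g" and "recursive n h"
  shows "recursive n (\<lambda>xs. (f ^^ g xs) (h xs))"
proof (rule recursive_comp2[OF _ assms(2,3)])
  have "recursive 2 (\<lambda>xs. rec_nat (tl xs ! 0) (\<lambda>m y. f ((m # y # tl xs) ! 1)) (hd xs))"
    using recursive_Prim[of 1, OF recursive_nth[of 0] recursive_comp1[OF assms(1) recursive_nth[of 1]]]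
    by (simp add: numeral_2_eq_2)
  then show "recursive 2 (\<lambda>ys. (f ^^ (ys ! 0)) (ys ! 1))"
    by (rule recursive_cong) (auto simp: numeral_2_eq_2 length_Suc_conv rec_nat_eq_funpow)
qed

lemma recursive_add: "recursive n g \<Longrightarrow> recursive n h \<Longrightarrow> recursive n (\<lambda>xs. g xs + h xs)"
  using recursive_funpow[OF recursive_Suc[OF recursive_nth[of 0 1]]] by simp

lemma funpow_pred: "((\<lambda>x. x - 1) ^^ n) x = x - n"
  by (induction n) auto

lemma rec_nat_pred: "rec_nat 0 (\<lambda>m _. m) n = n - 1"
  by (cases n) auto

lemma recursive_diff:
  assumes "recursive n g" and "recursive n h"
  shows "recursive n (\<lambda>xs. g xs - h xs)"
proof -
  have "recursive 1 (\<lambda>xs. rec_nat 0 (\<lambda>m y. (m # y # tl xs) ! 0) (hd xs))"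
    using recursive_Prim[OF recursive_const recursive_nth[of 0]] by simp
  then have "recursive 1 (\<lambda>ys. ys ! 0 - 1)"
    by (rule recursive_cong) (auto simp: length_Suc_conv rec_nat_pred)
  then have "recursive n (\<lambda>xs. ((\<lambda>x. x - 1) ^^ h xs) (g xs))"
    using assms by (intro recursive_funpow)
  then show ?thesis by (rule recursive_cong) (simp only: funpow_pred)
qed

lemma recursive_if_zero:
  assumes "recursive n c" and "recursive n a" and "recursive n b"
  shows "recursive n (\<lambda>xs. if c xs = 0 then a xs else b xs)"
proof (rule recursive_comp3[OF _ assms])
  have rec_nat_const: "rec_nat a (\<lambda>_ _. b) k = (if k = 0 then a else b)" for a b k :: nat
    by (cases k) auto
  have "recursive 3 (\<lambda>xs. rec_nat (tl xs ! 0) (\<lambda>m y. (m # y # tl xs) ! 3) (hd xs))"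
    using recursive_Prim[of 2, OF recursive_nth[of 0] recursive_nth[of 3]] by (simp add: numeral_eq_Suc)
  then show "recursive 3 (\<lambda>ys. if ys ! 0 = 0 then ys ! 1 else ys ! 2)"
  proof (rule recursive_cong)
    fix xs :: "nat list"
    assume "length xs = 3"
    then obtain x y z where "xs = [x, y, z]" by (auto simp: numeral_eq_Suc length_Suc_conv)
    then show "rec_nat (tl xs ! 0) (\<lambda>m y. (m # y # tl xs) ! 3) (hd xs) =
        (if xs ! 0 = 0 then xs ! 1 else xs ! 2)"
      by (simp add: rec_nat_const)
  qed
qed

lemma recursive_triangle: "recursive n g \<Longrightarrow> recursive n (\<lambda>xs. triangle (g xs))"
proof (rule recursive_comp1[of triangle])
  have triangle_rec: "rec_nat 0 (\<lambda>m y. Suc (y + m)) k = triangle k" for k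
    by (induction k) auto
  have "recursive 1 (\<lambda>xs. rec_nat 0 (\<lambda>m y. (m # y # tl xs) ! 1 + Suc ((m # y # tl xs) ! 0)) (hd xs))"
    using recursive_Prim[of 0, OF recursive_const
        recursive_add[OF recursive_nth[of 1] recursive_Suc[OF recursive_nth[of 0]]]] by simp
  then show "recursive 1 (\<lambda>ys. triangle (ys ! 0))"
    by (rule recursive_cong) (auto simp: length_Suc_conv triangle_rec)
qed

lemma recursive_prod_encode:
  "recursive n g \<Longrightarrow> recursive n h \<Longrightarrow> recursive n (\<lambda>xs. prod_encode (g xs, h xs))"
  unfolding prod_encode_def by (simp add: recursive_add recursive_triangle)

lemma recursive_If:
  assumes "decidable n P" and "recursive n a" and "recursive n b"
  shows "recursive n (\<lambda>xs. if P xs then a xs else b xs)"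
  using recursive_if_zero[OF assms(1)[unfolded decidable_def] assms(2,3)]
  by (rule recursive_cong) simp

lemma decidable_eq:
  assumes "recursive n g" and "recursive n h"
  shows "decidable n (\<lambda>xs. g xs = h xs)"
proof -
  have "recursive n (\<lambda>xs. if (g xs - h xs) + (h xs - g xs) = 0 then 0 else 1)"
    using assms by (intro recursive_if_zero recursive_add recursive_diff recursive_const)
  then show ?thesis unfolding decidable_def by (rule recursive_cong) auto
qed

lemma decidable_less:
  assumes "recursive n g" and "recursive n h"
  shows "decidable n (\<lambda>xs. g xs < h xs)"
proof -
  have "recursive n (\<lambda>xs. if Suc (g xs) - h xs = 0 then 0 else 1)"
    using assms by (intro recursive_if_zero recursive_Suc recursive_diff recursive_const)
  then show ?thesis unfolding decidable_def by (rule recursive_cong) auto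
qed

lemma decidable_conj:
  assumes "decidable n P" and "decidable n Q"
  shows "decidable n (\<lambda>xs. P xs \<and> Q xs)"
  using recursive_If[OF assms(1) assms(2)[unfolded decidable_def] recursive_const[of n 1]]
  unfolding decidable_def by (rule recursive_cong) simp

lemma decidable_disj:
  assumes "decidable n P" and "decidable n Q"
  shows "decidable n (\<lambda>xs. P xs \<or> Q xs)"
  using recursive_If[OF assms(1) recursive_const[of n 0] assms(2)[unfolded decidable_def]]
  unfolding decidable_def by (rule recursive_cong) simp

lemma decidable_If:
  assumes "decidable n P" and "decidable n Q" and "decidable n R"
  shows "decidable n (\<lambda>xs. if P xs then Q xs else R xs)"
  using recursive_If[OF assms(1) assms(2,3)[unfolded decidable_def]]
  unfolding decidable_def by (rule recursive_cong) simp

lemma eval_Mu_iff: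
  assumes "computes (Suc n) F f" and "length xs = n"
  shows "eval (Mu F) xs m \<longleftrightarrow> f (m # xs) = 0 \<and> (\<forall>k<m. f (k # xs) \<noteq> 0)"
proof
  assume "eval (Mu F) xs m"
  then have "eval F (m # xs) 0" and "\<forall>k<m. \<exists>y. eval F (k # xs) (Suc y)"
    by (cases rule: eval.cases, auto)+
  moreover have "eval F (k # xs) y \<longleftrightarrow> y = f (k # xs)" for k y
    using computes_eval_iff[OF assms(1)] assms(2) by simp
  ultimately show "f (m # xs) = 0 \<and> (\<forall>k<m. f (k # xs) \<noteq> 0)"
    by force
next
  assume least: "f (m # xs) = 0 \<and> (\<forall>k<m. f (k # xs) \<noteq> 0)"
  have eval_f: "eval F (k # xs) (f (k # xs))" for k
    using assms unfolding computes_def by simp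
  show "eval (Mu F) xs m"
  proof (rule eval_Mu)
    show "eval F (m # xs) 0" using eval_f[of m] least by simp
    show "\<forall>k<m. \<exists>y. eval F (k # xs) (Suc y)"
    proof (intro allI impI)
      fix k assume "k < m"
      then have "eval F (k # xs) (Suc (f (k # xs) - 1))" using eval_f[of k] least by simp
      then show "\<exists>y. eval F (k # xs) (Suc y)" ..
    qed
  qed
qed

lemma recursive_Least:
  assumes "decidable (Suc n) P" and "\<And>xs. length xs = n \<Longrightarrow> \<exists>m. P (m # xs)"
  shows "recursive n (\<lambda>xs. LEAST m. P (m # xs))"
proof -
  obtain F where F: "computes (Suc n) F (\<lambda>xs. if P xs then 0 else 1)"
    using assms(1) unfolding decidable_def recursive_def by blast
  have "eval (Mu F) xs (LEAST m. P (m # xs))" if "length xs = n" for xs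
    unfolding eval_Mu_iff[OF F that]
    using LeastI_ex[OF assms(2)[OF that]] not_less_Least by auto
  then show ?thesis unfolding recursive_def computes_def by blast
qed

lemma triangle_mono: "m \<le> n \<Longrightarrow> triangle m \<le> triangle n"
  by (induction n) (auto simp: le_Suc_eq)

text \<open>\<open>s\<close> is the diagonal \<open>a + b\<close> of \<open>x = prod_encode (a, b)\<close>.\<close>

lemma prod_decode_eq_diagonal:
  fixes x :: nat
  defines "s \<equiv> LEAST s. x < triangle (Suc s)"
  shows "prod_decode x = (x - triangle s, s - (x - triangle s))"
proof -
  obtain a b where ab: "prod_decode x = (a, b)" by (cases "prod_decode x")
  have x: "x = triangle (a + b) + a"
    using prod_decode_inverse[of x] ab by (simp add: prod_encode_def)
  have "s = a + b" unfolding s_def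
  proof (rule Least_equality)
    show "x < triangle (Suc (a + b))" using x by simp
    show "a + b \<le> s'" if "x < triangle (Suc s')" for s'
      using that x triangle_mono[of "Suc s'" "a + b"] by linarith
  qed
  then show ?thesis using ab x by simp
qed

lemma recursive_prod_decode:
  assumes "recursive n g"
  shows recursive_fst_prod_decode: "recursive n (\<lambda>xs. fst (prod_decode (g xs)))"
    and recursive_snd_prod_decode: "recursive n (\<lambda>xs. snd (prod_decode (g xs)))"
proof -
  have "decidable 2 (\<lambda>ys. ys ! 1 < triangle (Suc (ys ! 0)))"
    by (intro decidable_less recursive_nth recursive_triangle recursive_Suc) simp_all
  moreover have "\<exists>s. x < triangle (Suc s)" for x
    by (intro exI[of _ x]) simp
  ultimately have "recursive 1 (\<lambda>ys. LEAST s. (s # ys) ! 1 < triangle (Suc ((s # ys) ! 0)))"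
    by (intro recursive_Least) (auto simp: numeral_2_eq_2 length_Suc_conv)
  then have "recursive 1 (\<lambda>ys. LEAST s. ys ! 0 < triangle (Suc s))"
    by (rule recursive_cong) (auto simp: length_Suc_conv)
  then have diagonal: "recursive n (\<lambda>xs. LEAST s. g xs < triangle (Suc s))"
    using assms by (rule recursive_comp1)
  show "recursive n (\<lambda>xs. fst (prod_decode (g xs)))"
    using recursive_diff[OF assms recursive_triangle[OF diagonal]]
    by (rule recursive_cong) (simp add: prod_decode_eq_diagonal)
  show "recursive n (\<lambda>xs. snd (prod_decode (g xs)))"
    using recursive_diff[OF diagonal recursive_diff[OF assms recursive_triangle[OF diagonal]]]
    by (rule recursive_cong) (simp add: prod_decode_eq_diagonal)
qed

lemmas recursive_intros =
  recursive_const recursive_nth recursive_Suc recursive_add recursive_diff recursive_triangle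
  recursive_prod_encode recursive_fst_prod_decode recursive_snd_prod_decode recursive_funpow
  recursive_If decidable_eq decidable_less decidable_conj decidable_disj decidable_If

section \<open>Indices of preimages of c.e. sets\<close>

lemma inj_encode: "inj encode"
proof (rule injI)
  show "encode f = encode g \<Longrightarrow> f = g" for f g
  proof (induction f arbitrary: g)
    case (Comp f fs)
    then obtain f' fs' where g: "g = Comp f' fs'"
      by (cases g) auto
    with Comp.prems have "encode f = encode f'" and "map encode fs = map encode fs'"
      by (auto simp: list_encode_eq)
    then have "f = f'" and "fs = fs'"
      using Comp.IH by (auto intro: list.inj_map_strong[of fs fs' encode encode])
    then show ?case using g by simp
  qed (case_tac g; auto)+
qed

text \<open>For \<open>i = encode F\<close> this is \<open>encode (Comp F [H])\<close>; if \<open>i\<close> codes no program then neither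
  does \<open>compose_index H i\<close>, and both c.e. sets are empty.\<close>

definition compose_index :: "recf \<Rightarrow> nat \<Rightarrow> nat" where
  "compose_index H i = prod_encode (3, prod_encode (i, list_encode [encode H]))"

lemma eval_Comp_iff:
  "eval (Comp F Gs) xs z \<longleftrightarrow> (\<exists>ys. list_all2 (\<lambda>G y. eval G xs y) Gs ys \<and> eval F ys z)"
proof
  assume "eval (Comp F Gs) xs z"
  then show "\<exists>ys. list_all2 (\<lambda>G y. eval G xs y) Gs ys \<and> eval F ys z"
    by (cases rule: eval.cases) auto
qed (auto intro: eval_Comp)

lemma eval_Proj_iff: "eval (Proj i) xs y \<longleftrightarrow> i < length xs \<and> y = xs ! i"
  by (auto elim: eval.cases intro: eval_Proj)

lemma W_compose_index: "W (compose_index H i) = {x. \<exists>v. eval H [x] v \<and> v \<in> W i}"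
proof safe
  fix x
  assume "x \<in> W (compose_index H i)"
  then obtain f y where f: "encode f = compose_index H i" and "eval f [x] y"
    unfolding W_def by blast
  from f obtain F Gs where "f = Comp F Gs" and "encode F = i" and "map encode Gs = [encode H]"
    unfolding compose_index_def by (cases f) (auto simp: list_encode_eq simp del: list_encode.simps)
  moreover from this(3) have "Gs = [H]"
    using inj_encode by (auto simp: inj_eq)
  ultimately show "\<exists>v. eval H [x] v \<and> v \<in> W i"
    using \<open>eval f [x] y\<close> unfolding W_def by (auto simp: eval_Comp_iff list_all2_Cons1)
next
  fix x v
  assume "eval H [x] v" and "v \<in> W i"
  then obtain F y where "encode F = i" and "eval F [v] y"
    unfolding W_def by blast
  then have "encode (Comp F [H]) = compose_index H i" and "eval (Comp F [H]) [x] y"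
    using \<open>eval H [x] v\<close> by (auto simp: compose_index_def eval_Comp_iff simp del: list_encode.simps)
  then show "x \<in> W (compose_index H i)"
    unfolding W_def by blast
qed

lemma computable_compose_index: "computable (compose_index H)"
  unfolding computable_iff_recursive compose_index_def by (intro recursive_intros) simp

lemma guarded_program:
  assumes "decidable 1 (\<lambda>xs. P (xs ! 0))" and "recursive 1 (\<lambda>xs. h (xs ! 0))"
  shows "\<exists>H. \<forall>x v. eval H [x] v \<longleftrightarrow> P x \<and> v = h x"
proof -
  have "recursive 2 (\<lambda>ys. if P (ys ! 1) then 0 else 1)"
    using recursive_comp1[OF assms(1)[unfolded decidable_def] recursive_nth[of 1 2]] by simp
  then obtain C where C: "computes (Suc 1) C (\<lambda>ys. if P (ys ! 1) then 0 else 1)"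
    unfolding recursive_def by (auto simp: numeral_2_eq_2)
  obtain A where A: "computes 1 A (\<lambda>xs. h (xs ! 0))"
    using assms(2) unfolding recursive_def by blast
  have search: "eval (Mu C) [x] m \<longleftrightarrow> P x \<and> m = 0" for x m
    using eval_Mu_iff[OF C, of "[x]" m] by auto
  show ?thesis
  proof (intro exI allI)
    fix x v
    show "eval (Comp (Proj 0) [A, Mu C]) [x] v \<longleftrightarrow> P x \<and> v = h x"
      using search computes_eval_iff[OF A, of "[x]"]
      by (auto simp: eval_Comp_iff eval_Proj_iff list_all2_Cons1)
  qed
qed

lemma computable_preimage_index:
  assumes "decidable 1 (\<lambda>xs. P (xs ! 0))" and "recursive 1 (\<lambda>xs. h (xs ! 0))"
  shows "\<exists>g. computable g \<and> (\<forall>i. W (g i) = {x. P x \<and> h x \<in> W i})"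
proof -
  obtain H where "\<And>x v. eval H [x] v \<longleftrightarrow> P x \<and> v = h x"
    using guarded_program[OF assms] by blast
  then have "W (compose_index H i) = {x. P x \<and> h x \<in> W i}" for i
    by (auto simp: W_compose_index)
  then show ?thesis using computable_compose_index by blast
qed

section \<open>Permutations from equipollent fibres\<close>

lemma bij_of_eqpoll_fibres:
  fixes F G :: "'a \<Rightarrow> 'b"
  assumes "\<And>S. {n. F n = S} \<approx> {n. G n = S}"
  shows "\<exists>p. bij p \<and> (\<forall>n. F n = G (p n))"
proof -
  have "\<forall>S. \<exists>f. bij_betw f {n. F n = S} {n. G n = S}"
    using assms unfolding eqpoll_def by blast
  then obtain q where q: "\<And>S. bij_betw (q S) {n. F n = S} {n. G n = S}"
    by metis
  define p where "p n = q (F n) n" for n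
  have "bij_betw p {n. F n = S} {n. G n = S}" for S
    using q[of S] by (rule bij_betw_cong[THEN iffD1, rotated]) (simp add: p_def)
  then have "bij_betw p (\<Union>S. {n. F n = S}) (\<Union>S. {n. G n = S})"
    by (intro bij_betw_UNION_disjoint) (auto simp: disjoint_family_on_def)
  moreover have "(\<Union>S. {n. F n = S}) = UNIV" and "(\<Union>S. {n. G n = S}) = UNIV"
    by auto
  ultimately have "bij p" by simp
  moreover have "G (p n) = F n" for n
    using bij_betwE[OF q[of "F n"]] by (simp add: p_def)
  ultimately show ?thesis by auto
qed

lemma eqpoll_infinite_nat:
  fixes A B :: "nat set"
  assumes "infinite A" and "infinite B"
  shows "A \<approx> B"
proof -
  have lepoll: "C \<lesssim> D" if "infinite D" for C D :: "nat set"
    using subset_imp_lepoll[of C UNIV] infinite_le_lepoll[of D] that by (blast intro: lepoll_trans)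
  show ?thesis
    using lepoll[OF assms(2)] lepoll[OF assms(1)] by (rule lepoll_antisym)
qed

lemma eqpoll_if_distinct_lists:
  fixes A B :: "nat set"
  assumes AB: "\<And>ms. distinct ms \<Longrightarrow> set ms \<subseteq> A \<Longrightarrow>
      \<exists>ns. distinct ns \<and> set ns \<subseteq> B \<and> length ns = length ms"
    and BA: "\<And>ns. distinct ns \<Longrightarrow> set ns \<subseteq> B \<Longrightarrow>
      \<exists>ms. distinct ms \<and> set ms \<subseteq> A \<and> length ms = length ns"
  shows "A \<approx> B"
proof -
  have bounded: "finite D \<and> card C \<le> card D"
    if "finite C"
      and CD: "\<And>ms. distinct ms \<Longrightarrow> set ms \<subseteq> C \<Longrightarrow>
        \<exists>ns. distinct ns \<and> set ns \<subseteq> D \<and> length ns = length ms"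
      and DC: "\<And>ns. distinct ns \<Longrightarrow> set ns \<subseteq> D \<Longrightarrow>
        \<exists>ms. distinct ms \<and> set ms \<subseteq> C \<and> length ms = length ns"
    for C D :: "nat set"
  proof
    show "finite D"
    proof (rule ccontr)
      assume "infinite D"
      then obtain E where "E \<subseteq> D" "finite E" "card E = Suc (card C)"
        using infinite_arbitrarily_large by blast
      moreover obtain ns where "set ns = E" "distinct ns"
        using finite_distinct_list[OF \<open>finite E\<close>] by blast
      ultimately obtain ms where "distinct ms" "set ms \<subseteq> C" "length ms = Suc (card C)"
        using DC[of ns] by (auto simp: distinct_card[symmetric])
      then show False
        using card_mono[OF \<open>finite C\<close>, of "set ms"] by (simp add: distinct_card)
    qed
    obtain ms where "set ms = C" "distinct ms"
      using finite_distinct_list[OF \<open>finite C\<close>] by blast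
    then obtain ns where "distinct ns" "set ns \<subseteq> D" "length ns = card C"
      using CD[of ms] by (auto simp: distinct_card[symmetric])
    then show "card C \<le> card D"
      using card_mono[OF \<open>finite D\<close>, of "set ns"] by (simp add: distinct_card)
  qed
  show ?thesis
  proof (cases "finite A")
    case True
    then have "finite B" "card A \<le> card B" using bounded[OF True AB BA] by blast+
    moreover have "card B \<le> card A" using bounded[OF \<open>finite B\<close> BA AB] by blast
    ultimately show ?thesis using True by (simp add: eqpoll_iff_card)
  next
    case False
    then have "infinite B" using bounded[OF _ BA AB] by blast
    with False show ?thesis by (rule eqpoll_infinite_nat)
  qed
qed

section \<open>Reducing \<open>E_set\<close> to \<open>E_perm\<close>\<close>

lemma range_eq_iff_bij_repetition:
  fixes X Y :: "nat \<Rightarrow> 'a"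
  shows "range X = range Y \<longleftrightarrow>
    (\<exists>p. bij p \<and> (\<forall>n. X (fst (prod_decode n)) = Y (fst (prod_decode (p n)))))"
proof
  assume eq: "range X = range Y"
  have infinite_fibre: "infinite {n. Z (fst (prod_decode n)) = S}" if S: "S \<in> range Z"
    for Z :: "nat \<Rightarrow> 'a" and S
  proof -
    obtain m where "S = Z m" using S by blast
    then have "range (\<lambda>k. prod_encode (m, k)) \<subseteq> {n. Z (fst (prod_decode n)) = S}"
      by auto
    moreover have "infinite (range (\<lambda>k. prod_encode (m, k)))"
      by (rule range_inj_infinite) (simp add: inj_def)
    ultimately show ?thesis by (rule infinite_super)
  qed
  have "{n. X (fst (prod_decode n)) = S} \<approx> {n. Y (fst (prod_decode n)) = S}" for S
  proof (cases "S \<in> range X")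
    case True
    then show ?thesis using eq by (intro eqpoll_infinite_nat infinite_fibre) auto
  next
    case False
    then have "{n. X (fst (prod_decode n)) = S} = {}" and "{n. Y (fst (prod_decode n)) = S} = {}"
      using eq by auto
    then show ?thesis by simp
  qed
  then show "\<exists>p. bij p \<and> (\<forall>n. X (fst (prod_decode n)) = Y (fst (prod_decode (p n))))"
    by (rule bij_of_eqpoll_fibres)
next
  assume "\<exists>p. bij p \<and> (\<forall>n. X (fst (prod_decode n)) = Y (fst (prod_decode (p n))))"
  then obtain p where "bij p" and p: "\<And>n. X (fst (prod_decode n)) = Y (fst (prod_decode (p n)))"
    by blast
  have repeat: "range (\<lambda>n. Z (fst (prod_decode n))) = range Z" for Z :: "nat \<Rightarrow> 'a"
  proof (auto simp: image_iff)
    show "\<exists>n. Z m = Z (fst (prod_decode n))" for m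
      by (rule exI[of _ "prod_encode (m, 0)"]) simp
  qed
  have "range (\<lambda>n. X (fst (prod_decode n))) = (\<lambda>n. Y (fst (prod_decode n))) ` range p"
    by (auto simp: p)
  then show "range X = range Y"
    using \<open>bij p\<close> by (simp add: bij_is_surj repeat)
qed

lemma creducible_E_set_E_perm: "creducible E_set E_perm"
proof -
  define h where "h x = prod_encode (fst (prod_decode x), fst (prod_decode (snd (prod_decode x))))"
    for x
  have "decidable 1 (\<lambda>xs. True)"
    unfolding decidable_def by (simp add: recursive_const)
  moreover have "recursive 1 (\<lambda>xs. h (xs ! 0))"
    unfolding h_def by (intro recursive_intros) simp_all
  ultimately obtain g where "computable g" and g: "\<And>i. W (g i) = {x. h x \<in> W i}"
    using computable_preimage_index by fastforce
  have "column (W (g i)) n = column (W i) (fst (prod_decode n))" for i n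
    by (simp add: column_def g h_def)
  then have "E_set i j \<longleftrightarrow> E_perm (g i) (g j)" for i j
    unfolding E_set_def E_perm_def by (simp add: range_eq_iff_bij_repetition)
  then show ?thesis
    using \<open>computable g\<close> unfolding creducible_def by blast
qed

section \<open>Reducing \<open>E_perm\<close> to \<open>E_set\<close>\<close>

definition entry_pattern :: "nat list \<Rightarrow> nat \<Rightarrow> nat \<Rightarrow> bool" where
  "entry_pattern ms j j' \<longleftrightarrow>
    (j = length ms \<and> j' = length ms) \<or> (j < length ms \<and> j' < length ms \<and> ms ! j = ms ! j')"

text \<open>The pattern part is nonempty only if \<open>X n0 \<noteq> {}\<close>; the pair \<open>(length ms, length ms)\<close>
  in it records the length of \<open>ms\<close>, even when \<open>ms = []\<close>.\<close>

definition perm_code :: "(nat \<Rightarrow> nat set) \<Rightarrow> nat \<Rightarrow> nat list \<Rightarrow> nat set" where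
  "perm_code X n0 ms =
    {prod_encode (0, prod_encode (j, z)) | j z. j < length ms \<and> z \<in> X (ms ! j)} \<union>
    {prod_encode (Suc t, prod_encode (prod_encode (j, j'), z)) | t j j' z.
      entry_pattern ms j j' \<and> z \<in> X n0}"

lemma perm_code_member_0 [simp]:
  "prod_encode (0, prod_encode (j, z)) \<in> perm_code X n0 ms \<longleftrightarrow> j < length ms \<and> z \<in> X (ms ! j)"
  by (auto simp: perm_code_def)

lemma perm_code_member_Suc [simp]:
  "prod_encode (Suc t, prod_encode (prod_encode (j, j'), z)) \<in> perm_code X n0 ms \<longleftrightarrow>
    entry_pattern ms j j' \<and> z \<in> X n0"
  by (auto simp: perm_code_def)

lemma perm_code_reindex:
  assumes "inj p" and "\<And>n. X n = Y (p n)"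
  shows "perm_code X n0 ms = perm_code Y (p n0) (map p ms)"
proof -
  have "entry_pattern (map p ms) j j' \<longleftrightarrow> entry_pattern ms j j'" for j j'
    using assms(1) by (auto simp: entry_pattern_def inj_eq)
  then show ?thesis
    unfolding perm_code_def using assms(2) by auto
qed

lemma perm_code_eqD:
  assumes z: "z \<in> X n0" and eq: "perm_code X n0 ms = perm_code Y n1 ns"
  shows "z \<in> Y n1" and "length ns = length ms"
    and "\<And>j. j < length ms \<Longrightarrow> Y (ns ! j) = X (ms ! j)"
    and "\<And>j j'. entry_pattern ns j j' \<longleftrightarrow> entry_pattern ms j j'"
proof -
  have member_Suc:
    "prod_encode (Suc 0, prod_encode (prod_encode (j, j'), z')) \<in> perm_code X n0 ms \<longleftrightarrow>
      prod_encode (Suc 0, prod_encode (prod_encode (j, j'), z')) \<in> perm_code Y n1 ns" for j j' z'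
    by (simp only: eq)
  from member_Suc[of "length ms" "length ms" z] show z': "z \<in> Y n1"
    using z by (simp add: entry_pattern_def)
  show pattern: "entry_pattern ns j j' \<longleftrightarrow> entry_pattern ms j j'" for j j'
    using member_Suc[of j j' z] z z' by simp
  show length: "length ns = length ms"
    using pattern[of "length ms" "length ms"] pattern[of "length ns" "length ns"]
    by (auto simp: entry_pattern_def)
  show "Y (ns ! j) = X (ms ! j)" if "j < length ms" for j
  proof (rule set_eqI)
    fix z'
    have "prod_encode (0, prod_encode (j, z')) \<in> perm_code X n0 ms \<longleftrightarrow>
        prod_encode (0, prod_encode (j, z')) \<in> perm_code Y n1 ns"
      by (simp only: eq)
    then show "z' \<in> Y (ns ! j) \<longleftrightarrow> z' \<in> X (ms ! j)"
      using that length by simp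
  qed
qed

lemma perm_code_nonempty_transfer:
  assumes "range (case_prod (perm_code X)) \<subseteq> range (case_prod (perm_code Y))" and "z \<in> X n0"
  shows "\<exists>n1. z \<in> Y n1"
proof -
  have "case_prod (perm_code X) (n0, []) \<in> range (case_prod (perm_code Y))"
    using assms(1) by blast
  then obtain n1 ns where "perm_code X n0 [] = perm_code Y n1 ns"
    by (auto split: prod.splits)
  then have "z \<in> Y n1" by (rule perm_code_eqD(1)[of z X n0, OF assms(2)])
  then show ?thesis ..
qed

lemma perm_code_distinct_transfer:
  assumes "range (case_prod (perm_code X)) \<subseteq> range (case_prod (perm_code Y))"
    and "z \<in> X n0" and "distinct ms" and "set ms \<subseteq> {n. X n = S}"
  shows "\<exists>ns. distinct ns \<and> set ns \<subseteq> {n. Y n = S} \<and> length ns = length ms"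
proof -
  have "case_prod (perm_code X) (n0, ms) \<in> range (case_prod (perm_code Y))"
    using assms(1) by blast
  then obtain n1 ns where eq: "perm_code X n0 ms = perm_code Y n1 ns"
    by (auto split: prod.splits)
  note length = perm_code_eqD(2)[OF assms(2) eq]
    and columns = perm_code_eqD(3)[OF assms(2) eq]
    and pattern = perm_code_eqD(4)[OF assms(2) eq]
  have "distinct ns"
  proof (subst distinct_conv_nth, intro allI impI)
    fix a b
    assume "a < length ns" and "b < length ns" and "a \<noteq> b"
    then have "\<not> entry_pattern ms a b"
      using assms(3) length by (auto simp: entry_pattern_def nth_eq_iff_index_eq)
    then show "ns ! a \<noteq> ns ! b"
      using pattern \<open>a < length ns\<close> \<open>b < length ns\<close> by (auto simp: entry_pattern_def)
  qed
  moreover have "set ns \<subseteq> {n. Y n = S}"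
  proof
    fix n
    assume "n \<in> set ns"
    then obtain j where "j < length ms" and "n = ns ! j"
      using length by (auto simp: in_set_conv_nth)
    then show "n \<in> {n. Y n = S}"
      using assms(4) columns nth_mem by fastforce
  qed
  ultimately show ?thesis using length by blast
qed

lemma range_perm_code_eq_iff:
  "range (case_prod (perm_code X)) = range (case_prod (perm_code Y)) \<longleftrightarrow>
    (\<exists>p. bij p \<and> (\<forall>n. X n = Y (p n)))"
proof
  assume "\<exists>p. bij p \<and> (\<forall>n. X n = Y (p n))"
  then obtain p where "bij p" and p: "\<And>n. X n = Y (p n)" by blast
  have reindex: "range (case_prod (perm_code X')) \<subseteq> range (case_prod (perm_code Y'))"
    if "inj q" and "\<And>n. X' n = Y' (q n)" for X' Y' q
    using perm_code_reindex[of q X' Y'] that by fastforce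
  have p_inv: "Y n = X (inv p n)" for n
    using p \<open>bij p\<close> by (simp add: bij_is_surj surj_f_inv_f)
  show "range (case_prod (perm_code X)) = range (case_prod (perm_code Y))"
  proof (rule equalityI)
    show "range (case_prod (perm_code X)) \<subseteq> range (case_prod (perm_code Y))"
      using bij_is_inj[OF \<open>bij p\<close>] p by (rule reindex)
    show "range (case_prod (perm_code Y)) \<subseteq> range (case_prod (perm_code X))"
      using bij_is_inj[OF bij_imp_bij_inv[OF \<open>bij p\<close>]] p_inv by (rule reindex)
  qed
next
  assume eq: "range (case_prod (perm_code X)) = range (case_prod (perm_code Y))"
  show "\<exists>p. bij p \<and> (\<forall>n. X n = Y (p n))"
  proof (cases "\<exists>n0 z. z \<in> X n0")
    case True
    then obtain n0 z where z: "z \<in> X n0" by blast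
    then obtain n1 where z': "z \<in> Y n1"
      using perm_code_nonempty_transfer[OF equalityD1[OF eq]] by blast
    have "{n. X n = S} \<approx> {n. Y n = S}" for S
    proof (rule eqpoll_if_distinct_lists)
      show "\<exists>ns. distinct ns \<and> set ns \<subseteq> {n. Y n = S} \<and> length ns = length ms"
        if "distinct ms" and "set ms \<subseteq> {n. X n = S}" for ms
        using perm_code_distinct_transfer[OF equalityD1[OF eq] z that] .
      show "\<exists>ms. distinct ms \<and> set ms \<subseteq> {n. X n = S} \<and> length ms = length ns"
        if "distinct ns" and "set ns \<subseteq> {n. Y n = S}" for ns
        using perm_code_distinct_transfer[OF equalityD2[OF eq] z' that] .
    qed
    then show ?thesis by (rule bij_of_eqpoll_fibres)
  next
    case False
    then have "X n = {}" for n by blast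
    moreover have "Y n = {}" for n
      using False perm_code_nonempty_transfer[OF equalityD2[OF eq]] by blast
    ultimately show ?thesis by (intro exI[of _ id]) simp
  qed
qed

text \<open>A list \<open>ms\<close> is coded by its length together with
  \<open>d = prod_encode (ms ! 0, prod_encode (ms ! 1, \<dots>))\<close>.\<close>

definition stream_nth :: "nat \<Rightarrow> nat \<Rightarrow> nat" where
  "stream_nth d j = fst (prod_decode (((\<lambda>x. snd (prod_decode x)) ^^ j) d))"

definition stream_code :: "nat list \<Rightarrow> nat" where
  "stream_code ms = foldr (\<lambda>m d. prod_encode (m, d)) ms 0"

definition index_list :: "nat \<Rightarrow> nat \<Rightarrow> nat list" where
  "index_list k d = map (stream_nth d) [0..<k]"

lemma stream_nth_stream_code: "j < length ms \<Longrightarrow> stream_nth (stream_code ms) j = ms ! j"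
proof (induction ms arbitrary: j)
  case (Cons m ms)
  then show ?case
    by (cases j) (simp_all add: stream_nth_def stream_code_def funpow_Suc_right del: funpow.simps)
qed simp

lemma index_list_stream_code: "index_list (length ms) (stream_code ms) = ms"
  by (rule nth_equalityI) (simp_all add: index_list_def stream_nth_stream_code)

lemma entry_pattern_index_list:
  "entry_pattern (index_list k d) j j' \<longleftrightarrow>
    (j = k \<and> j' = k) \<or> (j < k \<and> j' < k \<and> stream_nth d j = stream_nth d j')"
  by (auto simp: entry_pattern_def index_list_def)

lemma recursive_stream_nth:
  "recursive n g \<Longrightarrow> recursive n h \<Longrightarrow> recursive n (\<lambda>xs. stream_nth (g xs) (h xs))"
  unfolding stream_nth_def by (intro recursive_intros) simp_all

definition perm_code_test :: "nat \<Rightarrow> bool" where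
  "perm_code_test x =
    (let (y, c) = prod_decode x; (t, r) = prod_decode y; (u, _) = prod_decode r;
         (_, s) = prod_decode c; (k, d) = prod_decode s; (j, j') = prod_decode u
     in if t = 0 then u < k else entry_pattern (index_list k d) j j')"

definition perm_code_source :: "nat \<Rightarrow> nat" where
  "perm_code_source x =
    (let (y, c) = prod_decode x; (t, r) = prod_decode y; (u, z) = prod_decode r;
         (n0, s) = prod_decode c; (_, d) = prod_decode s
     in prod_encode (z, if t = 0 then stream_nth d u else n0))"

lemma decidable_perm_code_test: "decidable 1 (\<lambda>xs. perm_code_test (xs ! 0))"
  unfolding perm_code_test_def Let_def case_prod_beta entry_pattern_index_list
  by (intro recursive_intros recursive_stream_nth) simp_all

lemma recursive_perm_code_source: "recursive 1 (\<lambda>xs. perm_code_source (xs ! 0))"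
  unfolding perm_code_source_def Let_def case_prod_beta
  by (intro recursive_intros recursive_stream_nth) simp_all

lemma column_perm_code:
  "column {x. perm_code_test x \<and> perm_code_source x \<in> A} (prod_encode (n0, prod_encode (k, d))) =
    perm_code (column A) n0 (index_list k d)"
proof (rule set_eqI)
  fix x
  obtain t u z where x: "x = prod_encode (t, prod_encode (u, z))"
    by (metis prod_decode_inverse surj_pair)
  obtain j j' where u: "u = prod_encode (j, j')"
    by (metis prod_decode_inverse surj_pair)
  show "x \<in> column {x. perm_code_test x \<and> perm_code_source x \<in> A}
      (prod_encode (n0, prod_encode (k, d))) \<longleftrightarrow> x \<in> perm_code (column A) n0 (index_list k d)"
    by (cases t) (auto simp: x u column_def perm_code_test_def perm_code_source_def index_list_def)
qed

lemma creducible_E_perm_E_set: "creducible E_perm E_set"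
proof -
  obtain g where "computable g"
    and g: "\<And>i. W (g i) = {x. perm_code_test x \<and> perm_code_source x \<in> W i}"
    using computable_preimage_index[OF decidable_perm_code_test recursive_perm_code_source] by blast
  have "range (column (W (g i))) = range (case_prod (perm_code (column (W i))))" for i
  proof (intro equalityI subsetI)
    fix S
    assume "S \<in> range (column (W (g i)))"
    then obtain n0 k d where "S = column (W (g i)) (prod_encode (n0, prod_encode (k, d)))"
      by (metis prod_decode_inverse surj_pair rangeE)
    then have "S = case_prod (perm_code (column (W i))) (n0, index_list k d)"
      by (simp add: g column_perm_code)
    then show "S \<in> range (case_prod (perm_code (column (W i))))" by blast
  next
    fix S
    assume "S \<in> range (case_prod (perm_code (column (W i))))"
    then obtain n0 ms where "S = perm_code (column (W i)) n0 ms" by auto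
    then have "S = column (W (g i)) (prod_encode (n0, prod_encode (length ms, stream_code ms)))"
      by (simp add: g column_perm_code index_list_stream_code)
    then show "S \<in> range (column (W (g i)))" by simp
  qed
  then have "E_perm i j \<longleftrightarrow> E_set (g i) (g j)" for i j
    unfolding E_set_def E_perm_def by (simp add: range_perm_code_eq_iff)
  then show ?thesis
    using \<open>computable g\<close> unfolding creducible_def by blast
qed

theorem theorem2p3:
  shows "creducible E_perm E_set \<and> creducible E_set E_perm"
  using creducible_E_perm_E_set creducible_E_set_E_perm by blast

end
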